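(* The transition kernel $\hat\pi^{(\epsilon)}(x,dy)$ converges in total variation to $W_1(dy)$ uniformly in $x$: $\sup_{x\in\Omega_1}d_{TV}(\hat\pi^{(\epsilon)}(x,\cdot),W_1)\to0$ as $\epsilon\to0$. Moreover, for any $\gamma\in(0,1)$ there is $\epsilon_0=\epsilon_0(\gamma)$ such that $\hat\pi^{(\epsilon)}(x,A)\ge\gamma W_1(A)$ for all $x\in\Omega_1$, all Borel $A\subseteq\Omega_1$ and all $\epsilon<\epsilon_0$.
   Context: $\phi,\psi$ positive smooth, $\phi$ supported in $[0,1]$, $\psi:\mathbb{R}^2\to\mathbb{R}$ symmetric supported in $\{|x|\le1/2\}$, $R(s,y)=(\phi\star\tilde\phi)(s)(\psi\star\psi)(y)$, $\tilde\phi(s)=\phi(-s)$. Fix $\hat\beta>0$, let $\beta_\epsilon=\hat\beta/\sqrt{\log(1/\epsilon)}$. $\Omega_1=\{\omega\in C([0,1];\mathbb{R}^2):\omega(0)=0\}$, $W_1$ Wiener measure on $\Omega_1$, $\hat{\mathbb{P}}^{(\epsilon)}_1(dx)\propto\exp\big(\frac{\beta_\epsilon^2}{2}\int_{[0,1]^2}R(s-u,x(s)-x(u))dsdu\big)W_1(dx)$ normalized to a probability. $I^{(\epsilon)}(x,y)=\beta_\epsilon^2\int_{[0,1]^2}R(s-u,y(s)+x(1)-x(u))dsdu$ for $x,y\in\Omega_1$. Let $\rho^{(\epsilon)}>0$ be the largest eigenvalue and $\Psi^{(\epsilon)}$ the (unique) associated eigenfunction of $\int_{\Omega_1}e^{I^{(\epsilon)}(x,y)}\Psi(y)\hat{\mathbb{P}}^{(\epsilon)}_1(dy)=\rho\Psi(x)$,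 with $\Psi^{(\epsilon)}$ bounded above and below by positive constants and $\int\Psi^{(\epsilon)}d\hat{\mathbb{P}}^{(\epsilon)}_1=1$. Define $\hat\pi^{(\epsilon)}(x,dy)=\frac{e^{I^{(\epsilon)}(x,y)}\Psi^{(\epsilon)}(y)\hat{\mathbb{P}}^{(\epsilon)}_1(dy)}{\rho^{(\epsilon)}\Psi^{(\epsilon)}(x)}$. *)

theory Defs
  imports "HOL-Probability.Probability"
begin

definition pdir :: "'a::euclidean_space \<Rightarrow> ('a \<Rightarrow> real) \<Rightarrow> 'a \<Rightarrow> real" where
  "pdir v g x = deriv (\<lambda>t. g (x + t *\<^sub>R v)) 0"

definition smooth_fun :: "('a::euclidean_space \<Rightarrow> real) \<Rightarrow> bool" where
  "smooth_fun g \<longleftrightarrow>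
     (\<forall>vs. set vs \<subseteq> Basis \<longrightarrow>
        continuous_on UNIV (foldr pdir vs g) \<and>
        (\<forall>v\<in>Basis. \<forall>x. (\<lambda>t. foldr pdir vs g (x + t *\<^sub>R v)) differentiable (at 0)))"

text \<open>Paths are represented extensionally: value 0 outside [0,1].\<close>
definition Omega1 :: "(real \<Rightarrow> real^2) set" where
  "Omega1 = {\<omega>. continuous_on {0..1} \<omega> \<and> \<omega> 0 = 0 \<and> (\<forall>t. t \<notin> {0..1} \<longrightarrow> \<omega> t = 0)}"

definition sup_dist :: "(real \<Rightarrow> real^2) \<Rightarrow> (real \<Rightarrow> real^2) \<Rightarrow> real" where
  "sup_dist \<omega> \<eta> = (SUP t\<in>{0..1}. norm (\<omega> t - \<eta> t))"

definition Omega1_open :: "(real \<Rightarrow> real^2) set \<Rightarrow> bool" where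
  "Omega1_open U \<longleftrightarrow> U \<subseteq> Omega1 \<and>
     (\<forall>\<omega>\<in>U. \<exists>e>0. \<forall>\<eta>\<in>Omega1. sup_dist \<omega> \<eta> < e \<longrightarrow> \<eta> \<in> U)"

definition Omega1_borel :: "(real \<Rightarrow> real^2) measure" where
  "Omega1_borel = sigma Omega1 {U. Omega1_open U}"

definition is_wiener :: "(real \<Rightarrow> real^2) measure \<Rightarrow> bool" where
  "is_wiener W \<longleftrightarrow> prob_space W \<and> sets W = sets Omega1_borel \<and> space W = Omega1 \<and>
     (\<forall>(t::nat \<Rightarrow> real) n. t 0 = 0 \<and> (\<forall>i<n. t i < t (Suc i)) \<and> t n \<le> 1 \<longrightarrow>
        prob_space.indep_vars W (\<lambda>_. borel)
          (\<lambda>(i, k) \<omega>. (\<omega> (t (Suc i)) - \<omega> (t i)) $ k) ({..<n} \<times> (UNIV :: 2 set)) \<and>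
        (\<forall>i<n. \<forall>k::2. distributed W lborel (\<lambda>\<omega>. (\<omega> (t (Suc i)) - \<omega> (t i)) $ k)
                         (normal_density 0 (sqrt (t (Suc i) - t i)))))"

definition conv_R :: "(real \<Rightarrow> real) \<Rightarrow> (real^2 \<Rightarrow> real) \<Rightarrow> real \<Rightarrow> real^2 \<Rightarrow> real" where
  "conv_R \<phi> \<psi> s y =
     (\<integral>u. \<phi> (s - u) * \<phi> (- u) \<partial>lborel) * (\<integral>z. \<psi> (y - z) * \<psi> z \<partial>lborel)"

definition beta_eps :: "real \<Rightarrow> real \<Rightarrow> real" where
  "beta_eps \<beta>h \<epsilon> = \<beta>h / sqrt (ln (1 / \<epsilon>))"

definition self_energy :: "(real \<Rightarrow> real^2 \<Rightarrow> real) \<Rightarrow> real \<Rightarrow> (real \<Rightarrow> real^2) \<Rightarrow> real" where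
  "self_energy R \<beta> x =
     \<beta>\<^sup>2 / 2 * (\<integral>s\<in>{0..1}. (\<integral>u\<in>{0..1}. R (s - u) (x s - x u) \<partial>lborel) \<partial>lborel)"

definition Phat :: "(real \<Rightarrow> real^2) measure \<Rightarrow> (real \<Rightarrow> real^2 \<Rightarrow> real) \<Rightarrow> real
                     \<Rightarrow> (real \<Rightarrow> real^2) measure" where
  "Phat W R \<beta> = density W (\<lambda>x. ennreal (exp (self_energy R \<beta> x) /
                     (\<integral>y. exp (self_energy R \<beta> y) \<partial>W)))"

definition interaction :: "(real \<Rightarrow> real^2 \<Rightarrow> real) \<Rightarrow> real \<Rightarrow> (real \<Rightarrow> real^2)
                             \<Rightarrow> (real \<Rightarrow> real^2) \<Rightarrow> real" where
  "interaction R \<beta> x y =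
     \<beta>\<^sup>2 * (\<integral>s\<in>{0..1}. (\<integral>u\<in>{0..1}. R (s - u) (y s + x 1 - x u) \<partial>lborel) \<partial>lborel)"

definition kernel_pi :: "(real \<Rightarrow> real^2) measure \<Rightarrow> (real \<Rightarrow> real^2 \<Rightarrow> real) \<Rightarrow> real
     \<Rightarrow> real \<Rightarrow> ((real \<Rightarrow> real^2) \<Rightarrow> real) \<Rightarrow> (real \<Rightarrow> real^2) \<Rightarrow> (real \<Rightarrow> real^2) measure" where
  "kernel_pi W R \<beta> \<rho> \<Psi> x = density (Phat W R \<beta>)
     (\<lambda>y. ennreal (exp (interaction R \<beta> x y) * \<Psi> y / (\<rho> * \<Psi> x)))"

definition is_eigenpair :: "(real \<Rightarrow> real^2) measure \<Rightarrow> (real \<Rightarrow> real^2 \<Rightarrow> real) \<Rightarrow> real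
     \<Rightarrow> real \<Rightarrow> ((real \<Rightarrow> real^2) \<Rightarrow> real) \<Rightarrow> bool" where
  "is_eigenpair W R \<beta> lam f \<longleftrightarrow>
     f \<in> borel_measurable Omega1_borel \<and> (\<exists>C. \<forall>x\<in>Omega1. \<bar>f x\<bar> \<le> C) \<and>
     (\<exists>x\<in>Omega1. f x \<noteq> 0) \<and>
     (\<forall>x\<in>Omega1. (\<integral>y. exp (interaction R \<beta> x y) * f y \<partial>Phat W R \<beta>) = lam * f x)"

definition dTV :: "'a measure \<Rightarrow> 'a measure \<Rightarrow> real" where
  "dTV M N = (SUP A\<in>sets M. \<bar>measure M A - measure N A\<bar>)"

end

(*
  Everything rests on the bound 0 <= R <= B, valid because phi and psi are continuous with compact
  support. With d = beta^2 B, the self-energy and the interaction I take values in [0, d], so the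
  density of Phat with respect to W lies in [e^-d, e^d]. As 1 <= e^I <= e^d and Psi is normalised,
  integrating the eigen-equation against Phat gives 1 <= rho Psi(x) <= e^d; integrating this once
  more gives 1 <= rho <= e^d, hence e^-d <= Psi <= e^d. Thus the density of pi(x, .) with respect
  to W lies in [e^-3d, e^3d] uniformly in x, and both claims follow since
  d = betahat^2 B / log (1/eps) -> 0.
*)
theory Submission
  imports Defs "HOL-Real_Asymp.Real_Asymp"
begin

lemma continuous_on_smooth_fun: "smooth_fun g \<Longrightarrow> continuous_on UNIV g"
  unfolding smooth_fun_def by (metis empty_subsetI foldr_Nil id_apply list.set(1))

lemma continuous_vanishing_off_compact_bounded:
  fixes f :: "'a::topological_space \<Rightarrow> real"
  assumes "continuous_on UNIV f" "compact K" "\<And>x. x \<notin> K \<Longrightarrow> f x = 0"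
  obtains M where "\<And>x. \<bar>f x\<bar> \<le> M"
proof -
  have "bounded (f ` K)"
    using assms by (intro compact_imp_bounded compact_continuous_image) (auto intro: continuous_on_subset)
  then obtain M where M: "\<And>x. x \<in> K \<Longrightarrow> \<bar>f x\<bar> \<le> M"
    by (auto simp: bounded_iff)
  have "\<bar>f x\<bar> \<le> max 0 M" for x
    using M[of x] assms(3)[of x] by (cases "x \<in> K") auto
  then show thesis ..
qed

lemma integral_mult_vanishing_off_compact_bounds:
  fixes f g :: "'a::euclidean_space \<Rightarrow> real"
  assumes f: "\<And>x. 0 \<le> f x" "\<And>x. f x \<le> M"
    and g: "\<And>x. 0 \<le> g x" "\<And>x. g x \<le> M" "\<And>x. x \<notin> S \<Longrightarrow> g x = 0"
    and S: "compact S"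
  shows "0 \<le> (\<integral>x. f x * g x \<partial>lborel) \<and> (\<integral>x. f x * g x \<partial>lborel) \<le> M * M * measure lborel S"
proof
  show "0 \<le> (\<integral>x. f x * g x \<partial>lborel)"
    using f g by (intro Bochner_Integration.integral_nonneg) auto
  have S_finite: "emeasure lborel S < \<infinity>"
    by (rule emeasure_bounded_finite[OF compact_imp_bounded[OF S]])
  have S_sets: "S \<in> sets lborel"
    using borel_compact[OF S] by simp
  have "(\<integral>x. f x * g x \<partial>lborel) \<le> (\<integral>x. M * M * indicator S x \<partial>lborel)"
  proof (rule Bochner_Integration.integral_mono')
    show "integrable lborel (\<lambda>x. M * M * indicator S x)"
      using S_finite S_sets by (intro integrable_mult_right integrable_real_indicator) auto
    fix x
    show "f x * g x \<le> M * M * indicator S x"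
      using f[of x] g[of x] by (cases "x \<in> S") (auto intro: mult_mono)
    show "0 \<le> M * M * indicator S x"
      using f[of x] by (auto intro: order_trans)
  qed
  then show "(\<integral>x. f x * g x \<partial>lborel) \<le> M * M * measure lborel S"
    by simp
qed

lemma conv_R_bounded:
  fixes \<phi> :: "real \<Rightarrow> real" and \<psi> :: "real^2 \<Rightarrow> real"
  assumes \<phi>: "continuous_on UNIV \<phi>" "compact K" "\<And>s. s \<notin> K \<Longrightarrow> \<phi> s = 0" "\<And>s. 0 \<le> \<phi> s"
    and \<psi>: "continuous_on UNIV \<psi>" "compact L" "\<And>y. y \<notin> L \<Longrightarrow> \<psi> y = 0" "\<And>y. 0 \<le> \<psi> y"
  obtains B where "\<And>s y. 0 \<le> conv_R \<phi> \<psi> s y" "\<And>s y. conv_R \<phi> \<psi> s y \<le> B"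
proof -
  obtain M1 where M1: "\<And>s. \<bar>\<phi> s\<bar> \<le> M1"
    using continuous_vanishing_off_compact_bounded[OF \<phi>(1-3)] by blast
  obtain M2 where M2: "\<And>y. \<bar>\<psi> y\<bar> \<le> M2"
    using continuous_vanishing_off_compact_bounded[OF \<psi>(1-3)] by blast
  have time: "0 \<le> (\<integral>u. \<phi> (s - u) * \<phi> (- u) \<partial>lborel) \<and>
      (\<integral>u. \<phi> (s - u) * \<phi> (- u) \<partial>lborel) \<le> M1 * M1 * measure lborel (uminus ` K)" for s
    using M1 \<phi> by (intro integral_mult_vanishing_off_compact_bounds compact_negations)
      (auto simp: abs_le_iff, metis image_eqI minus_minus)
  have space: "0 \<le> (\<integral>z. \<psi> (y - z) * \<psi> z \<partial>lborel) \<and>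
      (\<integral>z. \<psi> (y - z) * \<psi> z \<partial>lborel) \<le> M2 * M2 * measure lborel L" for y
    using M2 \<psi> by (intro integral_mult_vanishing_off_compact_bounds) (auto simp: abs_le_iff)
  show thesis
  proof
    fix s y
    show "0 \<le> conv_R \<phi> \<psi> s y"
      using time[of s] space[of y] by (simp add: conv_R_def)
    show "conv_R \<phi> \<psi> s y \<le> (M1 * M1 * measure lborel (uminus ` K)) * (M2 * M2 * measure lborel L)"
      using time[of s] space[of y] unfolding conv_R_def by (intro mult_mono) auto
  qed
qed

lemma set_integral_unit_interval_bounds:
  fixes f :: "real \<Rightarrow> real"
  assumes "\<And>u. 0 \<le> f u" "\<And>u. f u \<le> B"
  shows "0 \<le> (\<integral>u\<in>{0..1}. f u \<partial>lborel) \<and> (\<integral>u\<in>{0..1}. f u \<partial>lborel) \<le> B"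
proof
  show "0 \<le> (\<integral>u\<in>{0..1}. f u \<partial>lborel)"
    unfolding set_lebesgue_integral_def
    using assms(1) by (intro Bochner_Integration.integral_nonneg) (simp add: indicator_def)
  have "(\<integral>u\<in>{0..1}. f u \<partial>lborel) \<le> (\<integral>u. indicator {0..1::real} u * B \<partial>lborel)"
    unfolding set_lebesgue_integral_def
  proof (rule Bochner_Integration.integral_mono')
    show "integrable lborel (\<lambda>u. indicator {0..1::real} u * B)"
      by (intro integrable_mult_left integrable_real_indicator) auto
    fix u
    show "indicator {0..1} u *\<^sub>R f u \<le> indicator {0..1} u * B" "0 \<le> indicator {0..1} u * B"
      using assms[of u] by (auto simp: indicator_def)
  qed
  then show "(\<integral>u\<in>{0..1}. f u \<partial>lborel) \<le> B"
    by simp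
qed

lemma unit_square_integral_bounds:
  fixes F :: "real \<Rightarrow> real \<Rightarrow> real"
  assumes "\<And>s u. 0 \<le> F s u" "\<And>s u. F s u \<le> B"
  shows "0 \<le> (\<integral>s\<in>{0..1}. (\<integral>u\<in>{0..1}. F s u \<partial>lborel) \<partial>lborel) \<and>
         (\<integral>s\<in>{0..1}. (\<integral>u\<in>{0..1}. F s u \<partial>lborel) \<partial>lborel) \<le> B"
  using set_integral_unit_interval_bounds[of "F s" B for s] assms
  by (intro set_integral_unit_interval_bounds) auto

lemma self_energy_bounds:
  assumes "\<And>s y. 0 \<le> R s y" "\<And>s y. R s y \<le> B"
  shows "0 \<le> self_energy R \<beta> x \<and> self_energy R \<beta> x \<le> \<beta>\<^sup>2 * B"
proof -
  define J where "J = (\<integral>s\<in>{0..1}. (\<integral>u\<in>{0..1}. R (s - u) (x s - x u) \<partial>lborel) \<partial>lborel)"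
  have J: "0 \<le> J" "J \<le> B"
    unfolding J_def using unit_square_integral_bounds[OF assms] by auto
  have "\<beta>\<^sup>2 / 2 * J \<le> \<beta>\<^sup>2 * J"
    using J by simp
  also have "\<dots> \<le> \<beta>\<^sup>2 * B"
    using J by (simp add: mult_left_mono)
  finally show ?thesis
    using J unfolding self_energy_def J_def[symmetric] by simp
qed

lemma interaction_bounds:
  assumes "\<And>s y. 0 \<le> R s y" "\<And>s y. R s y \<le> B"
  shows "0 \<le> interaction R \<beta> x y \<and> interaction R \<beta> x y \<le> \<beta>\<^sup>2 * B"
proof -
  have "0 \<le> (\<integral>s\<in>{0..1}. (\<integral>u\<in>{0..1}. R (s - u) (y s + x 1 - x u) \<partial>lborel) \<partial>lborel) \<and>
        (\<integral>s\<in>{0..1}. (\<integral>u\<in>{0..1}. R (s - u) (y s + x 1 - x u) \<partial>lborel) \<partial>lborel) \<le> B"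
    using assms by (intro unit_square_integral_bounds)
  then show ?thesis
    unfolding interaction_def by (auto intro: mult_left_mono)
qed

lemma beta_eps_squared_tendsto_zero: "((\<lambda>\<epsilon>. (beta_eps \<beta>h \<epsilon>)\<^sup>2) \<longlongrightarrow> 0) (at_right 0)"
proof -
  have "((\<lambda>\<epsilon>::real. \<beta>h\<^sup>2 * (1 / sqrt (ln (1 / \<epsilon>)))\<^sup>2) \<longlongrightarrow> 0) (at_right 0)"
    by (intro tendsto_mult_right_zero) real_asymp
  then show ?thesis
    by (simp add: beta_eps_def power_divide)
qed

lemma measure_density_exp_bounds:
  fixes f :: "'a \<Rightarrow> real"
  assumes "finite_measure M" "f \<in> borel_measurable M"
    and f: "\<And>x. x \<in> space M \<Longrightarrow> exp (- t) \<le> f x \<and> f x \<le> exp t"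
    and A: "A \<in> sets M"
  shows "exp (- t) * measure M A \<le> measure (density M (\<lambda>x. ennreal (f x))) A \<and>
         measure (density M (\<lambda>x. ennreal (f x))) A \<le> exp t * measure M A"
proof -
  interpret finite_measure M by fact
  have emeasure_density_A: "emeasure (density M (\<lambda>x. ennreal (f x))) A = (\<integral>\<^sup>+x. ennreal (f x) * indicator A x \<partial>M)"
    using assms(2) A by (intro emeasure_density) auto
  have const: "(\<integral>\<^sup>+x. ennreal (exp c) * indicator A x \<partial>M) = ennreal (exp c * measure M A)" for c
    using A by (simp add: nn_integral_cmult_indicator emeasure_eq_measure ennreal_mult)
  have "(\<integral>\<^sup>+x. ennreal (f x) * indicator A x \<partial>M) \<le> ennreal (exp t * measure M A)"
    unfolding const[symmetric] using f by (intro nn_integral_mono) (auto split: split_indicator)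
  then have upper: "emeasure (density M (\<lambda>x. ennreal (f x))) A \<le> ennreal (exp t * measure M A)"
    using emeasure_density_A by simp
  have "ennreal (exp (- t) * measure M A) \<le> (\<integral>\<^sup>+x. ennreal (f x) * indicator A x \<partial>M)"
    unfolding const[symmetric] using f by (intro nn_integral_mono) (auto split: split_indicator intro: ennreal_leI)
  then have lower: "ennreal (exp (- t) * measure M A) \<le> emeasure (density M (\<lambda>x. ennreal (f x))) A"
    using emeasure_density_A by simp
  have "emeasure (density M (\<lambda>x. ennreal (f x))) A = ennreal (measure (density M (\<lambda>x. ennreal (f x))) A)"
    using upper by (intro emeasure_eq_ennreal_measure) (auto simp: top_unique)
  then show ?thesis
    using upper lower by simp
qed

lemma dTV_le_exp_minus_one:
  assumes "prob_space N" "sets M = sets N"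
    and bounds: "\<And>A. A \<in> sets N \<Longrightarrow>
      exp (- t) * measure N A \<le> measure M A \<and> measure M A \<le> exp t * measure N A"
  shows "0 \<le> dTV M N \<and> dTV M N \<le> exp t - 1"
proof -
  interpret prob_space N by fact
  have "exp (- t) \<le> exp t"
    using bounds[OF sets.top] unfolding prob_space by linarith
  then have "0 \<le> t"
    by simp
  have diff: "\<bar>measure M A - measure N A\<bar> \<le> exp t - 1" if A: "A \<in> sets N" for A
  proof -
    have "exp (- t) \<le> 1" "1 - t \<le> exp (- t)" "1 + t \<le> exp t"
      using \<open>0 \<le> t\<close> exp_ge_add_one_self[of "- t"] by auto
    then have "(1 - exp (- t)) * measure N A \<le> 1 - exp (- t)" "(exp t - 1) * measure N A \<le> exp t - 1"
      by (auto intro!: mult_right_le_one_le)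
    then have "measure N A - exp (- t) * measure N A \<le> 1 - exp (- t)"
      "exp t * measure N A - measure N A \<le> exp t - 1"
      by (simp_all add: algebra_simps)
    then show ?thesis
      using bounds[OF A] \<open>1 - t \<le> exp (- t)\<close> \<open>1 + t \<le> exp t\<close>
      unfolding abs_le_iff by linarith
  qed
  have bdd: "bdd_above ((\<lambda>A. \<bar>measure M A - measure N A\<bar>) ` sets M)"
    using diff \<open>sets M = sets N\<close> by (intro bdd_aboveI) auto
  have "\<bar>measure M {} - measure N {}\<bar> \<le> dTV M N"
    unfolding dTV_def by (rule cSUP_upper[OF _ bdd]) simp
  moreover have "dTV M N \<le> exp t - 1"
    unfolding dTV_def using diff \<open>sets M = sets N\<close> by (intro cSUP_least) auto
  ultimately show ?thesis
    by simp
qed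

lemma SUP_tendsto_zero_uniform:
  fixes f :: "'a \<Rightarrow> 'b \<Rightarrow> real"
  assumes "X \<noteq> {}" "(g \<longlongrightarrow> 0) F"
    and bounds: "\<forall>\<^sub>F \<epsilon> in F. \<forall>x\<in>X. 0 \<le> f \<epsilon> x \<and> f \<epsilon> x \<le> g \<epsilon>"
  shows "((\<lambda>\<epsilon>. SUP x\<in>X. f \<epsilon> x) \<longlongrightarrow> 0) F"
proof (rule tendsto_sandwich[OF _ _ tendsto_const \<open>(g \<longlongrightarrow> 0) F\<close>])
  have "0 \<le> (SUP x\<in>X. f \<epsilon> x) \<and> (SUP x\<in>X. f \<epsilon> x) \<le> g \<epsilon>"
    if "\<forall>x\<in>X. 0 \<le> f \<epsilon> x \<and> f \<epsilon> x \<le> g \<epsilon>" for \<epsilon>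
  proof
    obtain x where "x \<in> X"
      using \<open>X \<noteq> {}\<close> by blast
    then show "0 \<le> (SUP x\<in>X. f \<epsilon> x)"
      using that by (intro cSUP_upper2[of _ _ x]) (auto intro: bdd_aboveI2)
    show "(SUP x\<in>X. f \<epsilon> x) \<le> g \<epsilon>"
      using that \<open>X \<noteq> {}\<close> by (intro cSUP_least) auto
  qed
  then show "\<forall>\<^sub>F \<epsilon> in F. 0 \<le> (SUP x\<in>X. f \<epsilon> x)" "\<forall>\<^sub>F \<epsilon> in F. (SUP x\<in>X. f \<epsilon> x) \<le> g \<epsilon>"
    using bounds by (auto elim: eventually_mono)
qed

context
  fixes P :: "'a measure" and I :: "'a \<Rightarrow> 'a \<Rightarrow> real" and \<Psi> :: "'a \<Rightarrow> real" and \<rho> d :: real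
  assumes prob: "prob_space P"
    and I_bounds: "\<And>x y. x \<in> space P \<Longrightarrow> y \<in> space P \<Longrightarrow> 0 \<le> I x y \<and> I x y \<le> d"
    and Psi_pos: "\<And>y. y \<in> space P \<Longrightarrow> 0 < \<Psi> y"
    and Psi_normalized: "(\<integral>y. \<Psi> y \<partial>P) = 1"
    and rho_pos: "0 < \<rho>"
    and eigen: "\<And>x. x \<in> space P \<Longrightarrow> (\<integral>y. exp (I x y) * \<Psi> y \<partial>P) = \<rho> * \<Psi> x"
begin

lemma eigen_integrand_integrable:
  assumes "x \<in> space P"
  shows "integrable P (\<lambda>y. exp (I x y) * \<Psi> y)"
  using eigen[OF assms] rho_pos Psi_pos[OF assms] not_integrable_integral_eq by fastforce

lemma eigenvalue_eigenfunction_product_bounds: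
  assumes x: "x \<in> space P"
  shows "1 \<le> \<rho> * \<Psi> x \<and> \<rho> * \<Psi> x \<le> exp d"
proof
  have Psi_integrable: "integrable P \<Psi>"
    using Psi_normalized not_integrable_integral_eq by fastforce
  have "(\<integral>y. \<Psi> y \<partial>P) \<le> (\<integral>y. exp (I x y) * \<Psi> y \<partial>P)"
    using x I_bounds Psi_pos
    by (intro integral_mono Psi_integrable eigen_integrand_integrable) (auto intro!: mult_le_cancel_right1[THEN iffD2])
  then show "1 \<le> \<rho> * \<Psi> x"
    using Psi_normalized eigen[OF x] by simp
  have "(\<integral>y. exp (I x y) * \<Psi> y \<partial>P) \<le> (\<integral>y. exp d * \<Psi> y \<partial>P)"
    using x I_bounds Psi_pos
    by (intro integral_mono Psi_integrable eigen_integrand_integrable integrable_mult_right)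
      (auto intro!: mult_right_mono)
  then show "\<rho> * \<Psi> x \<le> exp d"
    using Psi_normalized eigen[OF x] by simp
qed

lemma eigenvalue_bounds: "1 \<le> \<rho> \<and> \<rho> \<le> exp d"
proof -
  interpret prob_space P by (rule prob)
  have Psi_integrable: "integrable P \<Psi>"
    using Psi_normalized not_integrable_integral_eq by fastforce
  have "1 \<le> (\<integral>y. \<rho> * \<Psi> y \<partial>P)"
    using eigenvalue_eigenfunction_product_bounds Psi_integrable
    by (intro integral_ge_const integrable_mult_right AE_I2) auto
  moreover have "(\<integral>y. \<rho> * \<Psi> y \<partial>P) \<le> exp d"
    using eigenvalue_eigenfunction_product_bounds Psi_integrable
    by (intro integral_le_const integrable_mult_right AE_I2) auto
  ultimately show ?thesis
    using Psi_normalized by simp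
qed

lemma eigenfunction_bounds:
  assumes y: "y \<in> space P"
  shows "exp (- d) \<le> \<Psi> y \<and> \<Psi> y \<le> exp d"
proof
  have \<rho>: "1 \<le> \<rho>" "\<rho> \<le> exp d"
    using eigenvalue_bounds by auto
  have y_bounds: "1 \<le> \<rho> * \<Psi> y" "\<rho> * \<Psi> y \<le> exp d"
    using eigenvalue_eigenfunction_product_bounds[OF y] by auto
  have "exp (- d) = 1 / exp d"
    by (simp add: exp_minus field_simps)
  also have "\<dots> \<le> \<rho> * \<Psi> y / \<rho>"
    using y_bounds \<rho> by (intro frac_le) auto
  finally show "exp (- d) \<le> \<Psi> y"
    using rho_pos by simp
  have "\<Psi> y \<le> \<rho> * \<Psi> y"
    using \<rho> Psi_pos[OF y] by simp
  then show "\<Psi> y \<le> exp d"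
    using y_bounds by simp
qed

lemma eigen_kernel_density_bounds:
  assumes x: "x \<in> space P" and y: "y \<in> space P"
  shows "exp (- (2 * d)) \<le> exp (I x y) * \<Psi> y / (\<rho> * \<Psi> x) \<and>
         exp (I x y) * \<Psi> y / (\<rho> * \<Psi> x) \<le> exp (2 * d)"
proof
  have x_bounds: "1 \<le> \<rho> * \<Psi> x" "\<rho> * \<Psi> x \<le> exp d"
    using eigenvalue_eigenfunction_product_bounds[OF x] by auto
  have y_bounds: "exp (- d) \<le> \<Psi> y" "\<Psi> y \<le> exp d"
    using eigenfunction_bounds[OF y] by auto
  have "exp (- (2 * d)) = 1 * exp (- d) / exp d"
    by (simp add: exp_minus field_simps flip: exp_add)
  also have "\<dots> \<le> exp (I x y) * \<Psi> y / (\<rho> * \<Psi> x)"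
    using I_bounds[OF x y] x_bounds y_bounds Psi_pos[OF y] by (intro frac_le mult_mono) auto
  finally show "exp (- (2 * d)) \<le> exp (I x y) * \<Psi> y / (\<rho> * \<Psi> x)" .
  have "exp (I x y) * \<Psi> y / (\<rho> * \<Psi> x) \<le> exp d * exp d / 1"
    using I_bounds[OF x y] x_bounds y_bounds Psi_pos[OF y] by (intro frac_le mult_mono) auto
  then show "exp (I x y) * \<Psi> y / (\<rho> * \<Psi> x) \<le> exp (2 * d)"
    by (simp flip: exp_add)
qed

end

(* Otherwise the normalising constant is the junk value 0, and Phat collapses to the null measure. *)
lemma integrable_exp_self_energy:
  assumes "(\<integral>y. f y \<partial>Phat W R \<beta>) \<noteq> 0"
  shows "integrable W (\<lambda>x. exp (self_energy R \<beta> x))"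
proof (rule ccontr)
  assume "\<not> integrable W (\<lambda>x. exp (self_energy R \<beta> x))"
  then have "Phat W R \<beta> = null_measure W"
    by (simp add: Phat_def not_integrable_integral_eq null_measure_eq_density)
  then show False
    using assms by simp
qed

context
  fixes W :: "(real \<Rightarrow> real^2) measure" and R :: "real \<Rightarrow> real^2 \<Rightarrow> real" and B \<beta> :: real
  assumes W: "prob_space W"
    and R_bounds: "\<And>s y. 0 \<le> R s y" "\<And>s y. R s y \<le> B"
    and integrable: "integrable W (\<lambda>x. exp (self_energy R \<beta> x))"
begin

lemma partition_function_bounds:
  "1 \<le> (\<integral>x. exp (self_energy R \<beta> x) \<partial>W) \<and> (\<integral>x. exp (self_energy R \<beta> x) \<partial>W) \<le> exp (\<beta>\<^sup>2 * B)"
  using self_energy_bounds[OF R_bounds] integrable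
  by (auto intro!: prob_space.integral_ge_const[OF W] prob_space.integral_le_const[OF W])

lemma Phat_density_bounds:
  "exp (- (\<beta>\<^sup>2 * B)) \<le> exp (self_energy R \<beta> x) / (\<integral>y. exp (self_energy R \<beta> y) \<partial>W) \<and>
   exp (self_energy R \<beta> x) / (\<integral>y. exp (self_energy R \<beta> y) \<partial>W) \<le> exp (\<beta>\<^sup>2 * B)"
proof -
  have Z: "1 \<le> (\<integral>y. exp (self_energy R \<beta> y) \<partial>W)" "(\<integral>y. exp (self_energy R \<beta> y) \<partial>W) \<le> exp (\<beta>\<^sup>2 * B)"
    using partition_function_bounds by auto
  have SE: "1 \<le> exp (self_energy R \<beta> x)" "exp (self_energy R \<beta> x) \<le> exp (\<beta>\<^sup>2 * B)"
    using self_energy_bounds[OF R_bounds] by auto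
  have "exp (- (\<beta>\<^sup>2 * B)) = 1 / exp (\<beta>\<^sup>2 * B)"
    by (simp add: exp_minus field_simps)
  also have "\<dots> \<le> exp (self_energy R \<beta> x) / (\<integral>y. exp (self_energy R \<beta> y) \<partial>W)"
    using Z SE by (intro frac_le) auto
  moreover have "exp (self_energy R \<beta> x) / (\<integral>y. exp (self_energy R \<beta> y) \<partial>W) \<le> exp (\<beta>\<^sup>2 * B) / 1"
    using Z SE by (intro frac_le) auto
  ultimately show ?thesis
    by simp
qed

lemma prob_space_Phat: "prob_space (Phat W R \<beta>)"
proof
  have "emeasure (Phat W R \<beta>) (space (Phat W R \<beta>)) =
      (\<integral>\<^sup>+x. ennreal (exp (self_energy R \<beta> x) / (\<integral>y. exp (self_energy R \<beta> y) \<partial>W)) \<partial>W)"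
    unfolding Phat_def using integrable
    by (subst emeasure_density) (auto intro!: nn_integral_cong)
  also have "\<dots> = ennreal (\<integral>x. exp (self_energy R \<beta> x) / (\<integral>y. exp (self_energy R \<beta> y) \<partial>W) \<partial>W)"
    using integrable by (intro nn_integral_eq_integral) auto
  also have "\<dots> = 1"
    using partition_function_bounds by simp
  finally show "emeasure (Phat W R \<beta>) (space (Phat W R \<beta>)) = 1" .
qed

lemma measure_Phat_bounds:
  assumes "A \<in> sets W"
  shows "exp (- (\<beta>\<^sup>2 * B)) * measure W A \<le> measure (Phat W R \<beta>) A \<and>
         measure (Phat W R \<beta>) A \<le> exp (\<beta>\<^sup>2 * B) * measure W A"
  unfolding Phat_def
  using W integrable assms Phat_density_bounds
  by (intro measure_density_exp_bounds prob_space.axioms(1) borel_measurable_divide) auto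

end

lemma sets_kernel_pi [simp]: "sets (kernel_pi W R \<beta> \<rho> \<Psi> x) = sets W"
  by (simp add: kernel_pi_def Phat_def)

context
  fixes W :: "(real \<Rightarrow> real^2) measure" and R :: "real \<Rightarrow> real^2 \<Rightarrow> real"
    and B \<beta> \<rho> :: real and \<Psi> :: "(real \<Rightarrow> real^2) \<Rightarrow> real"
  assumes W: "prob_space W" "space W = Omega1"
    and R_bounds: "\<And>s y. 0 \<le> R s y" "\<And>s y. R s y \<le> B"
    and rho_pos: "0 < \<rho>" and eigen: "is_eigenpair W R \<beta> \<rho> \<Psi>"
    and Psi_pos: "\<And>y. y \<in> Omega1 \<Longrightarrow> 0 < \<Psi> y"
    and Psi_normalized: "(\<integral>y. \<Psi> y \<partial>Phat W R \<beta>) = 1"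
begin

lemma integrable_exp_self_energy_of_eigenpair: "integrable W (\<lambda>x. exp (self_energy R \<beta> x))"
  using Psi_normalized by (intro integrable_exp_self_energy[where f = \<Psi>]) simp

lemma measure_kernel_pi_Phat_bounds:
  assumes x: "x \<in> Omega1" and A: "A \<in> sets W"
  shows "exp (- (2 * (\<beta>\<^sup>2 * B))) * measure (Phat W R \<beta>) A \<le> measure (kernel_pi W R \<beta> \<rho> \<Psi> x) A \<and>
         measure (kernel_pi W R \<beta> \<rho> \<Psi> x) A \<le> exp (2 * (\<beta>\<^sup>2 * B)) * measure (Phat W R \<beta>) A"
proof -
  have Phat: "prob_space (Phat W R \<beta>)" "space (Phat W R \<beta>) = Omega1" "sets (Phat W R \<beta>) = sets W"
    using prob_space_Phat[OF W(1) R_bounds integrable_exp_self_energy_of_eigenpair] W(2)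
    by (auto simp: Phat_def)
  have "\<And>x. x \<in> space (Phat W R \<beta>) \<Longrightarrow>
      (\<integral>y. exp (interaction R \<beta> x y) * \<Psi> y \<partial>Phat W R \<beta>) = \<rho> * \<Psi> x"
    using eigen Phat(2) by (simp add: is_eigenpair_def)
  note eigen_facts = Phat(1) interaction_bounds[OF R_bounds] Psi_pos[folded Phat(2)]
    Psi_normalized rho_pos this
  show ?thesis
    unfolding kernel_pi_def
  proof (intro measure_density_exp_bounds prob_space.axioms(1)[OF Phat(1)] borel_measurable_divide)
    show "(\<lambda>y. exp (interaction R \<beta> x y) * \<Psi> y) \<in> borel_measurable (Phat W R \<beta>)"
      using eigen_integrand_integrable[OF eigen_facts] x Phat(2) by auto
    show "\<And>y. y \<in> space (Phat W R \<beta>) \<Longrightarrow>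
        exp (- (2 * (\<beta>\<^sup>2 * B))) \<le> exp (interaction R \<beta> x y) * \<Psi> y / (\<rho> * \<Psi> x) \<and>
        exp (interaction R \<beta> x y) * \<Psi> y / (\<rho> * \<Psi> x) \<le> exp (2 * (\<beta>\<^sup>2 * B))"
      using eigen_kernel_density_bounds[OF eigen_facts] x Phat(2) by auto
  qed (use A Phat(3) in auto)
qed

lemma measure_kernel_pi_bounds:
  assumes x: "x \<in> Omega1" and A: "A \<in> sets W"
  shows "exp (- (3 * (\<beta>\<^sup>2 * B))) * measure W A \<le> measure (kernel_pi W R \<beta> \<rho> \<Psi> x) A \<and>
         measure (kernel_pi W R \<beta> \<rho> \<Psi> x) A \<le> exp (3 * (\<beta>\<^sup>2 * B)) * measure W A"
proof -
  define d where "d = \<beta>\<^sup>2 * B"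
  have kernel: "exp (- (2 * d)) * measure (Phat W R \<beta>) A \<le> measure (kernel_pi W R \<beta> \<rho> \<Psi> x) A"
      "measure (kernel_pi W R \<beta> \<rho> \<Psi> x) A \<le> exp (2 * d) * measure (Phat W R \<beta>) A"
    using measure_kernel_pi_Phat_bounds[OF x A] by (auto simp: d_def)
  have Phat: "exp (- d) * measure W A \<le> measure (Phat W R \<beta>) A"
      "measure (Phat W R \<beta>) A \<le> exp d * measure W A"
    using measure_Phat_bounds[OF W(1) R_bounds integrable_exp_self_energy_of_eigenpair A]
    by (auto simp: d_def)
  have "exp (- (3 * d)) * measure W A = exp (- (2 * d)) * (exp (- d) * measure W A)"
    by (simp add: mult.assoc[symmetric] flip: exp_add)
  also have "\<dots> \<le> exp (- (2 * d)) * measure (Phat W R \<beta>) A"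
    using Phat(1) by (rule mult_left_mono) simp
  also have "\<dots> \<le> measure (kernel_pi W R \<beta> \<rho> \<Psi> x) A"
    by (fact kernel(1))
  finally have lower: "exp (- (3 * d)) * measure W A \<le> measure (kernel_pi W R \<beta> \<rho> \<Psi> x) A" .
  have "measure (kernel_pi W R \<beta> \<rho> \<Psi> x) A \<le> exp (2 * d) * measure (Phat W R \<beta>) A"
    by (fact kernel(2))
  also have "\<dots> \<le> exp (2 * d) * (exp d * measure W A)"
    using Phat(2) by (rule mult_left_mono) simp
  also have "\<dots> = exp (3 * d) * measure W A"
    by (simp add: mult.assoc[symmetric] flip: exp_add)
  finally show ?thesis
    using lower by (simp add: d_def)
qed

end

lemma SUP_dTV_tendsto_zero:
  fixes M :: "'c \<Rightarrow> 'b \<Rightarrow> 'a measure"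
  assumes N: "prob_space N" and "X \<noteq> {}" and \<delta>: "(\<delta> \<longlongrightarrow> 0) F"
    and sets: "\<And>\<epsilon> x. sets (M \<epsilon> x) = sets N"
    and bounds: "\<forall>\<^sub>F \<epsilon> in F. \<forall>x\<in>X. \<forall>A\<in>sets N.
      exp (- \<delta> \<epsilon>) * measure N A \<le> measure (M \<epsilon> x) A \<and> measure (M \<epsilon> x) A \<le> exp (\<delta> \<epsilon>) * measure N A"
  shows "((\<lambda>\<epsilon>. SUP x\<in>X. dTV (M \<epsilon> x) N) \<longlongrightarrow> 0) F"
proof (rule SUP_tendsto_zero_uniform)
  show "((\<lambda>\<epsilon>. exp (\<delta> \<epsilon>) - 1) \<longlongrightarrow> 0) F"
    using tendsto_diff[OF tendsto_exp[OF \<delta>] tendsto_const[of 1]] by simp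
  show "\<forall>\<^sub>F \<epsilon> in F. \<forall>x\<in>X. 0 \<le> dTV (M \<epsilon> x) N \<and> dTV (M \<epsilon> x) N \<le> exp (\<delta> \<epsilon>) - 1"
    using bounds by eventually_elim (intro ballI dTV_le_exp_minus_one[OF N sets], auto)
qed fact

lemma eventually_measure_minorization:
  assumes "(\<delta> \<longlongrightarrow> 0) F" "\<gamma> < 1"
    and bounds: "\<forall>\<^sub>F \<epsilon> in F. \<forall>x\<in>X. \<forall>A\<in>S. exp (- \<delta> \<epsilon>) * measure N A \<le> measure (M \<epsilon> x) A"
  shows "\<forall>\<^sub>F \<epsilon> in F. \<forall>x\<in>X. \<forall>A\<in>S. \<gamma> * measure N A \<le> measure (M \<epsilon> x) A"
proof -
  have "\<forall>\<^sub>F \<epsilon> in F. \<gamma> < exp (- \<delta> \<epsilon>)"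
    using tendsto_exp[OF tendsto_minus[OF assms(1)]] \<open>\<gamma> < 1\<close> by (intro order_tendstoD(1)) auto
  then show ?thesis
    using bounds
  proof eventually_elim
    case (elim \<epsilon>)
    have "\<gamma> * measure N A \<le> exp (- \<delta> \<epsilon>) * measure N A" for A
      using elim(1) by (intro mult_right_mono) auto
    then show ?case
      using elim(2) by (auto intro: order_trans)
  qed
qed

theorem proposition3p1:
  fixes \<phi> :: "real \<Rightarrow> real" and \<psi> :: "real^2 \<Rightarrow> real" and \<beta>h :: real
    and W :: "(real \<Rightarrow> real^2) measure"
    and \<rho> :: "real \<Rightarrow> real" and \<Psi> :: "real \<Rightarrow> (real \<Rightarrow> real^2) \<Rightarrow> real"
  assumes phi_smooth: "smooth_fun \<phi>" and phi_nonneg: "\<And>s. \<phi> s \<ge> 0"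
    and phi_supp: "\<And>s. s \<notin> {0..1} \<Longrightarrow> \<phi> s = 0"
    and psi_smooth: "smooth_fun \<psi>" and psi_nonneg: "\<And>y. \<psi> y \<ge> 0"
    and psi_symm: "\<And>y. \<psi> (- y) = \<psi> y"
    and psi_supp: "\<And>y. norm y > 1/2 \<Longrightarrow> \<psi> y = 0"
    and beta_pos: "\<beta>h > 0"
    and W: "is_wiener W"
    and rho_pos: "\<And>\<epsilon>. \<epsilon> \<in> {0<..<1} \<Longrightarrow> \<rho> \<epsilon> > 0"
    and eigen: "\<And>\<epsilon>. \<epsilon> \<in> {0<..<1} \<Longrightarrow>
                  is_eigenpair W (conv_R \<phi> \<psi>) (beta_eps \<beta>h \<epsilon>) (\<rho> \<epsilon>) (\<Psi> \<epsilon>)"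
    and largest: "\<And>\<epsilon> lam f. \<epsilon> \<in> {0<..<1} \<Longrightarrow>
                  is_eigenpair W (conv_R \<phi> \<psi>) (beta_eps \<beta>h \<epsilon>) lam f \<Longrightarrow> lam \<le> \<rho> \<epsilon>"
    and Psi_bounds: "\<And>\<epsilon>. \<epsilon> \<in> {0<..<1} \<Longrightarrow>
                  \<exists>c C. 0 < c \<and> c \<le> C \<and> (\<forall>x\<in>Omega1. c \<le> \<Psi> \<epsilon> x \<and> \<Psi> \<epsilon> x \<le> C)"
    and Psi_norm: "\<And>\<epsilon>. \<epsilon> \<in> {0<..<1} \<Longrightarrow>
                  (\<integral>y. \<Psi> \<epsilon> y \<partial>Phat W (conv_R \<phi> \<psi>) (beta_eps \<beta>h \<epsilon>)) = 1"
  shows "((\<lambda>\<epsilon>. SUP x\<in>Omega1. dTV (kernel_pi W (conv_R \<phi> \<psi>) (beta_eps \<beta>h \<epsilon>) (\<rho> \<epsilon>) (\<Psi> \<epsilon>) x) W)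
            \<longlongrightarrow> 0) (at_right 0)
         \<and> (\<forall>\<gamma>\<in>{0<..<1}. \<exists>\<epsilon>0>0. \<forall>\<epsilon>\<in>{0<..<\<epsilon>0}. \<forall>x\<in>Omega1. \<forall>A\<in>sets W.
              measure (kernel_pi W (conv_R \<phi> \<psi>) (beta_eps \<beta>h \<epsilon>) (\<rho> \<epsilon>) (\<Psi> \<epsilon>) x) A
                \<ge> \<gamma> * measure W A)"
proof -
  obtain B where R_bounds: "\<And>s y. 0 \<le> conv_R \<phi> \<psi> s y" "\<And>s y. conv_R \<phi> \<psi> s y \<le> B"
    using conv_R_bounded[OF continuous_on_smooth_fun[OF phi_smooth] compact_Icc phi_supp phi_nonneg
        continuous_on_smooth_fun[OF psi_smooth] compact_cball[of 0 "1/2"] _ psi_nonneg] psi_supp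
    by (metis mem_cball_0 not_le)
  define \<pi> where "\<pi> \<epsilon> = kernel_pi W (conv_R \<phi> \<psi>) (beta_eps \<beta>h \<epsilon>) (\<rho> \<epsilon>) (\<Psi> \<epsilon>)" for \<epsilon>
  define \<delta> where "\<delta> \<epsilon> = 3 * ((beta_eps \<beta>h \<epsilon>)\<^sup>2 * B)" for \<epsilon>
  have W_prob: "prob_space W" and W_space: "space W = Omega1"
    using W by (auto simp: is_wiener_def)
  have bounds_unit_interval: "\<forall>x\<in>Omega1. \<forall>A\<in>sets W. exp (- \<delta> \<epsilon>) * measure W A \<le> measure (\<pi> \<epsilon> x) A \<and>
      measure (\<pi> \<epsilon> x) A \<le> exp (\<delta> \<epsilon>) * measure W A" if \<epsilon>: "\<epsilon> \<in> {0<..<1}" for \<epsilon>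
    using measure_kernel_pi_bounds[OF W_prob W_space R_bounds rho_pos[OF \<epsilon>] eigen[OF \<epsilon>] _ Psi_norm[OF \<epsilon>]]
      Psi_bounds[OF \<epsilon>]
    unfolding \<pi>_def \<delta>_def by force
  have bounds: "\<forall>\<^sub>F \<epsilon> in at_right 0. \<forall>x\<in>Omega1. \<forall>A\<in>sets W.
      exp (- \<delta> \<epsilon>) * measure W A \<le> measure (\<pi> \<epsilon> x) A \<and> measure (\<pi> \<epsilon> x) A \<le> exp (\<delta> \<epsilon>) * measure W A"
    using eventually_mono[OF eventually_at_right_real[OF zero_less_one] bounds_unit_interval] .
  have \<delta>: "(\<delta> \<longlongrightarrow> 0) (at_right 0)"
    unfolding \<delta>_def by (intro tendsto_mult_right_zero tendsto_mult_left_zero beta_eps_squared_tendsto_zero)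
  have "Omega1 \<noteq> {}"
    by (auto simp: Omega1_def intro!: exI[of _ "\<lambda>_. 0"])
  have "((\<lambda>\<epsilon>. SUP x\<in>Omega1. dTV (\<pi> \<epsilon> x) W) \<longlongrightarrow> 0) (at_right 0)"
    by (rule SUP_dTV_tendsto_zero[OF W_prob \<open>Omega1 \<noteq> {}\<close> \<delta> _ bounds]) (simp add: \<pi>_def)
  moreover have "\<exists>\<epsilon>0>0. \<forall>\<epsilon>\<in>{0<..<\<epsilon>0}. \<forall>x\<in>Omega1. \<forall>A\<in>sets W. \<gamma> * measure W A \<le> measure (\<pi> \<epsilon> x) A"
    if "\<gamma> \<in> {0<..<1}" for \<gamma>
  proof -
    have "\<forall>\<^sub>F \<epsilon> in at_right 0. \<forall>x\<in>Omega1. \<forall>A\<in>sets W. \<gamma> * measure W A \<le> measure (\<pi> \<epsilon> x) A"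
      using that bounds by (intro eventually_measure_minorization[OF \<delta>]) (auto elim: eventually_mono)
    then show ?thesis
      by (auto simp: eventually_at_right_field)
  qed
  ultimately show ?thesis
    unfolding \<pi>_def by blast
qed

end
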